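(* The axiom system $\mathbf{AX}^{f}=\{\mathrm{Taut},\mathrm{MP},F1,F2,F3,F4,F5,F6\}$ is sound and complete for formulas about linear inequalities over real-valued functions with nonempty domain: such a formula is provable in $\mathbf{AX}^f$ iff it is valid.
   Context: Formulas about linear inequalities over real-valued functions are Boolean combinations of inequalities $a_1v_1+\cdots+a_kv_k\ge\tilde c$, where $v_1,v_2,\ldots$ are variables and $a_i,c$ are real numbers. Such a formula is satisfied by an assignment of functions $D\to\mathbb R$ (for a nonempty set $D$) to the variables if it holds when $\tilde c$ is read as the constant function $c$ on $D$, sums and scalar multiples pointwise, and $\ge$ as the pointwise order; Boolean connectives classical. It is valid if satisfied by every such assignment for every nonempty $D$. Abbreviations: $t\le\tilde d$ is $-t\ge\widetilde{-d}$; $t>\tilde d$ is $t\ge\tilde d\wedge\neg(t\le\tilde d)$. Axioms: Taut: all instances of propositional tautologies. MP: from $f$ and $f\Rightarrow g$ infer $g$. F1: $v-v\ge\tilde0$. F2: $(a_1v_1+\cdots+a_kv_k\ge\tilde c)\Leftrightarrow(a_1v_1+\cdots+a_kv_k+0v_{k+1}\ge\tilde c)$. F3: $(a_1v_1+\cdots+a_kv_k\ge\tilde c)\Leftrightarrow(a_{j_1}v_{j_1}+\cdots+a_{j_k}v_{j_k}\ge\tilde c)$ for any permutation $j_1,\ldots,j_k$ of $1,\ldots,k$. F4: $(a_1v_1+\cdots+a_kv_k\ge\tilde c)\wedge(a'_1v_1+\cdots+a'_kv_k\ge\tilde c')\Rightarrow((a_1+a'_1)v_1+\cdots+(a_k+a'_k)v_k\ge\widetilde{c+c'})$.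 F5: $(a_1v_1+\cdots+a_kv_k\ge\tilde c)\Leftrightarrow(da_1v_1+\cdots+da_kv_k\ge\widetilde{dc})$ for $d>0$. F6: $(a_1v_1+\cdots+a_kv_k\ge\tilde c)\Rightarrow(a_1v_1+\cdots+a_kv_k>\tilde d)$ if $c>d$. *)

theory Defs
  imports Complex_Main "HOL-Library.Multiset"
begin

text \<open>A term a1 v1 + ... + ak vk is a list of (coefficient, variable index) pairs;
  repetitions of variables are allowed (cf. axiom F1). Well-formed terms are nonempty (k >= 1).\<close>

type_synonym lterm = "(real \<times> nat) list"

datatype fm = Ge lterm real | Neg fm | Conj fm fm

definition Imp :: "fm \<Rightarrow> fm \<Rightarrow> fm" where
  "Imp f g = Neg (Conj f (Neg g))"

definition Iff :: "fm \<Rightarrow> fm \<Rightarrow> fm" where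
  "Iff f g = Conj (Imp f g) (Imp g f)"

definition Le :: "lterm \<Rightarrow> real \<Rightarrow> fm" where
  "Le t d = Ge (map (\<lambda>(a, v). (- a, v)) t) (- d)"

definition Gt :: "lterm \<Rightarrow> real \<Rightarrow> fm" where
  "Gt t d = Conj (Ge t d) (Neg (Le t d))"

fun wff :: "fm \<Rightarrow> bool" where
  "wff (Ge t c) = (t \<noteq> [])"
| "wff (Neg f) = wff f"
| "wff (Conj f g) = (wff f \<and> wff g)"

text \<open>An assignment gives each variable a function; only its values on D matter.\<close>
definition tval :: "lterm \<Rightarrow> (nat \<Rightarrow> 'd \<Rightarrow> real) \<Rightarrow> 'd \<Rightarrow> real" where
  "tval t \<sigma> x = (\<Sum>(a, v)\<leftarrow>t. a * \<sigma> v x)"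

fun sat :: "'d set \<Rightarrow> (nat \<Rightarrow> 'd \<Rightarrow> real) \<Rightarrow> fm \<Rightarrow> bool" where
  "sat D \<sigma> (Ge t c) = (\<forall>x\<in>D. tval t \<sigma> x \<ge> c)"
| "sat D \<sigma> (Neg f) = (\<not> sat D \<sigma> f)"
| "sat D \<sigma> (Conj f g) = (sat D \<sigma> f \<and> sat D \<sigma> g)"

definition valid :: "'d itself \<Rightarrow> fm \<Rightarrow> bool" where
  "valid _ f \<longleftrightarrow> (\<forall>(D :: 'd set) (\<sigma> :: nat \<Rightarrow> 'd \<Rightarrow> real). D \<noteq> {} \<longrightarrow> sat D \<sigma> f)"

datatype pf = PVar nat | PNot pf | PAnd pf pf

fun peval :: "(nat \<Rightarrow> bool) \<Rightarrow> pf \<Rightarrow> bool" where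
  "peval \<beta> (PVar n) = \<beta> n"
| "peval \<beta> (PNot p) = (\<not> peval \<beta> p)"
| "peval \<beta> (PAnd p q) = (peval \<beta> p \<and> peval \<beta> q)"

definition tautology :: "pf \<Rightarrow> bool" where
  "tautology p \<longleftrightarrow> (\<forall>\<beta>. peval \<beta> p)"

fun psubst :: "(nat \<Rightarrow> fm) \<Rightarrow> pf \<Rightarrow> fm" where
  "psubst s (PVar n) = s n"
| "psubst s (PNot p) = Neg (psubst s p)"
| "psubst s (PAnd p q) = Conj (psubst s p) (psubst s q)"

inductive axiom :: "fm \<Rightarrow> bool" where
  Taut: "tautology p \<Longrightarrow> wff (psubst s p) \<Longrightarrow> axiom (psubst s p)"
| F1: "axiom (Ge [(1, v), (-1, v)] 0)"
| F2: "t \<noteq> [] \<Longrightarrow> axiom (Iff (Ge t c) (Ge (t @ [(0, w)]) c))"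
| F3: "t \<noteq> [] \<Longrightarrow> mset t' = mset t \<Longrightarrow> axiom (Iff (Ge t c) (Ge t' c))"
| F4: "vs \<noteq> [] \<Longrightarrow> length as = length vs \<Longrightarrow> length as' = length vs \<Longrightarrow>
       axiom (Imp (Conj (Ge (zip as vs) c) (Ge (zip as' vs) c'))
                  (Ge (zip (map2 (+) as as') vs) (c + c')))"
| F5: "vs \<noteq> [] \<Longrightarrow> length as = length vs \<Longrightarrow> d > 0 \<Longrightarrow>
       axiom (Iff (Ge (zip as vs) c) (Ge (zip (map (\<lambda>a. d * a) as) vs) (d * c)))"
| F6: "t \<noteq> [] \<Longrightarrow> c > d \<Longrightarrow> axiom (Imp (Ge t c) (Gt t d))"

inductive provable :: "fm \<Rightarrow> bool" where
  Ax: "axiom f \<Longrightarrow> provable f"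
| MP: "provable f \<Longrightarrow> provable (Imp f g) \<Longrightarrow> provable g"

end

theory Submission
  imports Defs
begin

text \<open>
For completeness, a valid formula is split
along all truth assignments to its atoms; it suffices to refute every list of literals
\<open>t \<ge> c\<close>, \<open>\<not> s \<ge> d\<close> that no assignment of functions satisfies. Over an infinite domain
each negative literal can be falsified at its own point of \<open>D\<close>, so such a list is
unsatisfiable only if its positive part \<open>P\<close>, read as a system of linear inequalities over
\<open>\<real>\<^sup>n\<close>, is infeasible or entails one of the \<open>s \<ge> d\<close>. By Motzkin's transposition theorem
(proved by Fourier-Motzkin elimination) the entailment is witnessed by a nonnegative
combination of \<open>P\<close>, and each step of that combination is derivable: F1 makes every term
with vanishing coefficients provably \<open>\<ge> 0\<close>, F2 and F3 align terms on a common variable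
list, F4 adds, F5 scales, and F6 weakens the constant and refutes \<open>0 \<ge> c\<close> for \<open>c > 0\<close>.
\<close>

definition coeff :: "lterm \<Rightarrow> nat \<Rightarrow> real" where
  "coeff t v = (\<Sum>(a, w)\<leftarrow>t. if w = v then a else 0)"

definition lval :: "lterm \<Rightarrow> (nat \<Rightarrow> real) \<Rightarrow> real" where
  "lval t x = (\<Sum>(a, w)\<leftarrow>t. a * x w)"

definition scale :: "real \<Rightarrow> lterm \<Rightarrow> lterm" where
  "scale k t = map (\<lambda>(a, w). (k * a, w)) t"

definition zeros :: "nat list \<Rightarrow> lterm" where
  "zeros ws = map (\<lambda>w. (0, w)) ws"

definition add_aligned :: "lterm \<Rightarrow> lterm \<Rightarrow> lterm" where
  "add_aligned t u = map2 (\<lambda>(a, w) (b, _). (a + b, w)) t u"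

lemma coeff_Nil [simp]: "coeff [] = (\<lambda>_. 0)"
  by (simp add: coeff_def fun_eq_iff)

lemma coeff_Cons [simp]: "coeff ((a, w) # t) v = (if w = v then a else 0) + coeff t v"
  by (simp add: coeff_def)

lemma coeff_append [simp]: "coeff (t @ u) v = coeff t v + coeff u v"
  by (simp add: coeff_def)

lemma coeff_scale [simp]: "coeff (scale k t) v = k * coeff t v"
  by (induction t) (auto simp: scale_def coeff_def algebra_simps)

lemma coeff_zeros [simp]: "coeff (zeros ws) v = 0"
  by (induction ws) (auto simp: zeros_def)

lemma sum_list_map_mset:
  "mset xs = mset ys \<Longrightarrow> (\<Sum>x\<leftarrow>xs. g x) = (\<Sum>y\<leftarrow>ys. (g y :: real))"
  by (metis mset_map sum_mset_sum_list)

lemma coeff_mset: "mset t = mset t' \<Longrightarrow> coeff t = coeff t'"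
  unfolding coeff_def fun_eq_iff by (blast intro: sum_list_map_mset)

lemma coeff_nonzero_occurs: "coeff t v \<noteq> 0 \<Longrightarrow> v \<in> snd ` set t"
  by (induction t) (auto split: if_splits)

lemma lval_Nil [simp]: "lval [] x = 0"
  by (simp add: lval_def)

lemma lval_Cons [simp]: "lval ((a, w) # t) x = a * x w + lval t x"
  by (simp add: lval_def)

lemma lval_append [simp]: "lval (t @ u) x = lval t x + lval u x"
  by (simp add: lval_def)

lemma lval_scale [simp]: "lval (scale k t) x = k * lval t x"
  by (induction t) (auto simp: scale_def lval_def algebra_simps)

lemma lval_mset: "mset t = mset t' \<Longrightarrow> lval t x = lval t' x"
  unfolding lval_def by (rule sum_list_map_mset)

lemma lval_origin [simp]: "lval t (\<lambda>_. 0) = 0"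
  by (induction t) (auto simp: lval_def)

lemma lval_upd: "lval t (x(v := y)) = lval t x + coeff t v * (y - x v)"
  by (induction t) (auto simp: lval_def algebra_simps)

lemma tval_lval: "tval t \<sigma> x = lval t (\<lambda>v. \<sigma> v x)"
  by (simp add: tval_def lval_def)

lemma scale_simps [simp]:
  "scale k [] = []" "scale k ((a, w) # t) = (k * a, w) # scale k t" "scale k t = [] \<longleftrightarrow> t = []"
  "scale k (t @ u) = scale k t @ scale k u" "map snd (scale k t) = map snd t"
  "length (scale k t) = length t"
  by (auto simp: scale_def)

lemma zeros_simps [simp]:
  "zeros [] = []" "zeros (w # ws) = (0, w) # zeros ws" "zeros (ws @ vs) = zeros ws @ zeros vs"
  "map snd (zeros ws) = ws" "zeros ws = [] \<longleftrightarrow> ws = []" "length (zeros ws) = length ws"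
  by (auto simp: zeros_def comp_def)

lemma add_aligned_simps [simp]:
  "add_aligned [] u = []"
  "add_aligned ((a, w) # t) ((b, w') # u) = (a + b, w) # add_aligned t u"
  by (simp_all add: add_aligned_def)

lemma add_aligned_append:
  "length t = length t' \<Longrightarrow> add_aligned (t @ u) (t' @ u') = add_aligned t t' @ add_aligned u u'"
  by (simp add: add_aligned_def)

lemma add_aligned_zeros [simp]:
  "add_aligned t (zeros (map snd t)) = t" "add_aligned (zeros (map snd t)) t = t"
  by (induction t) auto

lemma add_aligned_opposite [simp]: "add_aligned t (scale (- 1) t) = zeros (map snd t)"
  by (induction t) auto

lemma Le_eq_Ge_scale: "Le t d = Ge (scale (- 1) t) (- d)"
  by (simp add: Le_def scale_def case_prod_beta)

fun feval :: "(lterm \<Rightarrow> real \<Rightarrow> bool) \<Rightarrow> fm \<Rightarrow> bool" where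
  "feval \<beta> (Ge t c) = \<beta> t c"
| "feval \<beta> (Neg f) = (\<not> feval \<beta> f)"
| "feval \<beta> (Conj f g) = (feval \<beta> f \<and> feval \<beta> g)"

fun atoms :: "fm \<Rightarrow> (lterm \<times> real) list" where
  "atoms (Ge t c) = [(t, c)]"
| "atoms (Neg f) = atoms f"
| "atoms (Conj f g) = atoms f @ atoms g"

fun skeleton :: "(lterm \<times> real \<Rightarrow> nat) \<Rightarrow> fm \<Rightarrow> pf" where
  "skeleton n (Ge t c) = PVar (n (t, c))"
| "skeleton n (Neg f) = PNot (skeleton n f)"
| "skeleton n (Conj f g) = PAnd (skeleton n f) (skeleton n g)"

abbreviation provable_from :: "fm list \<Rightarrow> fm \<Rightarrow> bool" where
  "provable_from H g \<equiv> provable (foldr Imp H g)"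

lemma feval_Imp [simp]: "feval \<beta> (Imp f g) = (feval \<beta> f \<longrightarrow> feval \<beta> g)"
  by (simp add: Imp_def)

lemma feval_Iff [simp]: "feval \<beta> (Iff f g) = (feval \<beta> f \<longleftrightarrow> feval \<beta> g)"
  by (auto simp: Iff_def)

lemma feval_foldr_Imp [simp]:
  "feval \<beta> (foldr Imp H g) = ((\<forall>h\<in>set H. feval \<beta> h) \<longrightarrow> feval \<beta> g)"
  by (induction H) auto

lemma wff_Imp [simp]: "wff (Imp f g) = (wff f \<and> wff g)"
  by (simp add: Imp_def)

lemma wff_Iff [simp]: "wff (Iff f g) = (wff f \<and> wff g)"
  by (auto simp: Iff_def)

lemma wff_foldr_Imp [simp]: "wff (foldr Imp H g) = ((\<forall>h\<in>set H. wff h) \<and> wff g)"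
  by (induction H) auto

lemma feval_cong: "\<forall>(t, c)\<in>set (atoms f). \<beta> t c = \<gamma> t c \<Longrightarrow> feval \<beta> f = feval \<gamma> f"
  by (induction f) auto

lemma psubst_skeleton:
  "\<forall>a\<in>set (atoms f). s (n a) = Ge (fst a) (snd a) \<Longrightarrow> psubst s (skeleton n f) = f"
  by (induction f) auto

lemma peval_skeleton: "peval \<beta> (skeleton n f) = feval (\<lambda>t c. \<beta> (n (t, c))) f"
  by (induction f) auto

lemma axiom_wff: "axiom f \<Longrightarrow> wff f"
  by (induction rule: axiom.induct) (auto simp: Gt_def Le_def zip_eq_Nil_iff)

lemma provable_wff: "provable f \<Longrightarrow> wff f"
  by (induction rule: provable.induct) (auto intro: axiom_wff)

lemma provable_tautology:
  assumes "wff f" and "\<And>\<beta>. feval \<beta> f"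
  shows "provable f"
proof -
  obtain n where n: "\<forall>a\<in>set (atoms f). atoms f ! n a = a"
    using in_set_conv_nth[of _ "atoms f"] by metis
  define s where "s i = Ge (fst (atoms f ! i)) (snd (atoms f ! i))" for i
  have f: "psubst s (skeleton n f) = f"
    using n by (intro psubst_skeleton) (simp add: s_def)
  have "tautology (skeleton n f)"
    using assms(2) by (simp add: tautology_def peval_skeleton)
  then have "axiom (psubst s (skeleton n f))"
    using assms(1) f by (intro axiom.Taut) simp_all
  then show ?thesis
    using f by (simp add: provable.Ax)
qed

lemma provable_foldr_Imp_mp: "provable_from gs h \<Longrightarrow> \<forall>g\<in>set gs. provable g \<Longrightarrow> provable h"
  by (induction gs) (auto intro: provable.MP)

lemma provable_consequence:
  assumes "\<forall>g\<in>set gs. provable g" and "\<And>\<beta>. \<forall>g\<in>set gs. feval \<beta> g \<Longrightarrow> feval \<beta> h"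
    and "wff h"
  shows "provable h"
proof (rule provable_foldr_Imp_mp)
  show "provable_from gs h"
    using assms provable_wff by (intro provable_tautology) auto
qed (use assms in simp)

lemma provable_from_consequence:
  assumes "\<forall>g\<in>set gs. provable_from H g" and "\<And>\<beta>. \<forall>g\<in>set gs. feval \<beta> g \<Longrightarrow> feval \<beta> h"
    and "wff h" and "\<forall>h\<in>set H. wff h"
  shows "provable_from H h"
  using assms by (intro provable_consequence[of "map (foldr Imp H) gs"]) auto

lemma provable_imp_trans: "provable (Imp A B) \<Longrightarrow> provable (Imp B C) \<Longrightarrow> provable (Imp A C)"
  by (rule provable_consequence[of "[Imp A B, Imp B C]"]) (auto dest: provable_wff)

lemma provable_IffD1: "provable (Iff A B) \<Longrightarrow> provable (Imp A B)"
  by (rule provable_consequence[of "[Iff A B]"]) (auto dest: provable_wff)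

lemma provable_IffD2: "provable (Iff A B) \<Longrightarrow> provable (Imp B A)"
  by (rule provable_consequence[of "[Iff A B]"]) (auto dest: provable_wff)

lemma provable_imp_discharge: "provable B \<Longrightarrow> provable (Imp (Conj A B) C) \<Longrightarrow> provable (Imp A C)"
  by (rule provable_consequence[of "[B, Imp (Conj A B) C]"]) (auto dest: provable_wff)

lemma provable_imp_conj:
  "provable (Imp A A') \<Longrightarrow> provable (Imp B B') \<Longrightarrow> provable (Imp (Conj A' B') C) \<Longrightarrow>
    provable (Imp (Conj A B) C)"
  by (rule provable_consequence[of "[Imp A A', Imp B B', Imp (Conj A' B') C]"]) (auto dest: provable_wff)

lemma provable_from_mp: "provable_from H A \<Longrightarrow> provable (Imp A B) \<Longrightarrow> provable_from H B"
  by (rule provable_consequence[of "[foldr Imp H A, Imp A B]"]) (auto dest: provable_wff)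

lemma provable_from_mp2:
  "provable_from H A \<Longrightarrow> provable_from H B \<Longrightarrow> provable (Imp (Conj A B) C) \<Longrightarrow> provable_from H C"
  by (rule provable_consequence[of "[foldr Imp H A, foldr Imp H B, Imp (Conj A B) C]"])
    (auto dest: provable_wff)

lemma provable_from_provable: "provable B \<Longrightarrow> \<forall>h\<in>set H. wff h \<Longrightarrow> provable_from H B"
  by (rule provable_consequence[of "[B]"]) (auto dest: provable_wff)

lemma provable_from_hyp: "h \<in> set H \<Longrightarrow> \<forall>h\<in>set H. wff h \<Longrightarrow> provable_from H h"
  by (rule provable_tautology) auto

section \<open>Soundness\<close>

lemma sat_Imp [simp]: "sat D \<sigma> (Imp f g) = (sat D \<sigma> f \<longrightarrow> sat D \<sigma> g)"
  by (simp add: Imp_def)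

lemma sat_Iff [simp]: "sat D \<sigma> (Iff f g) = (sat D \<sigma> f \<longleftrightarrow> sat D \<sigma> g)"
  by (auto simp: Iff_def)

lemma sat_psubst: "sat D \<sigma> (psubst s p) = peval (\<lambda>n. sat D \<sigma> (s n)) p"
  by (induction p) auto

lemma lval_zip_add:
  "length as = length vs \<Longrightarrow> length as' = length vs \<Longrightarrow>
    lval (zip (map2 (+) as as') vs) x = lval (zip as vs) x + lval (zip as' vs) x"
proof (induction vs arbitrary: as as')
  case (Cons v vs)
  then show ?case by (cases as; cases as') (auto simp: algebra_simps)
qed simp

lemma lval_zip_mult: "lval (zip (map (\<lambda>a. d * a) as) vs) x = d * lval (zip as vs) x"
proof (induction vs arbitrary: as)
  case (Cons v vs)
  then show ?case by (cases as) (auto simp: algebra_simps lval_def)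
qed simp

lemma axiom_sound: "axiom f \<Longrightarrow> D \<noteq> {} \<Longrightarrow> sat D \<sigma> f"
proof (induction rule: axiom.induct)
  case (Taut p s)
  then show ?case by (simp add: sat_psubst tautology_def)
next
  case (F3 t t' c)
  then show ?case by (simp add: tval_lval lval_mset[of t' t])
next
  case (F4 vs as as' c c')
  then show ?case by (auto simp: tval_lval lval_zip_add intro: add_mono)
next
  case (F5 vs as d c)
  then show ?case by (simp add: tval_lval lval_zip_mult)
next
  case (F6 t c d)
  then obtain x0 where "x0 \<in> D"
    by blast
  have "sat D \<sigma> (Gt t d)" if c_le: "\<forall>x\<in>D. c \<le> tval t \<sigma> x"
  proof -
    have "\<forall>x\<in>D. d \<le> tval t \<sigma> x"
      using c_le F6.hyps(2) by force
    moreover have "tval (scale (- 1) t) \<sigma> x0 < - d"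
      using c_le \<open>x0 \<in> D\<close> F6.hyps(2) by (force simp: tval_lval)
    ultimately show ?thesis
      using \<open>x0 \<in> D\<close> by (force simp: Gt_def Le_eq_Ge_scale)
  qed
  then show ?case
    by simp
qed (simp_all add: tval_lval)

lemma provable_sat: "provable f \<Longrightarrow> D \<noteq> {} \<Longrightarrow> sat D \<sigma> f"
  by (induction rule: provable.induct) (auto intro: axiom_sound)

theorem soundness: "provable f \<Longrightarrow> valid TYPE('d) f"
  unfolding valid_def by (blast intro: provable_sat)

section \<open>Derived rules for linear inequalities\<close>

lemma provable_add_aligned:
  assumes "t1 \<noteq> []" and "map snd t1 = map snd t2"
  shows "provable (Imp (Conj (Ge t1 c1) (Ge t2 c2)) (Ge (add_aligned t1 t2) (c1 + c2)))"
proof -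
  have len: "length t2 = length t1"
    using assms(2) by (metis length_map)
  have "zip (map2 (+) (map fst t1) (map fst t2)) (map snd t1) = add_aligned t1 t2"
    using len assms(2)
  proof (induction t1 arbitrary: t2)
    case (Cons p t1)
    then show ?case by (cases p; cases t2) auto
  qed simp
  moreover have "axiom (Imp (Conj (Ge (zip (map fst t1) (map snd t1)) c1)
      (Ge (zip (map fst t2) (map snd t1)) c2))
      (Ge (zip (map2 (+) (map fst t1) (map fst t2)) (map snd t1)) (c1 + c2)))"
    using assms len by (intro axiom.F4) auto
  ultimately show ?thesis
    using assms(2) by (metis provable.Ax zip_map_fst_snd)
qed

lemma provable_scale_iff:
  assumes "t \<noteq> []" and "d > 0"
  shows "provable (Iff (Ge t c) (Ge (scale d t) (d * c)))"
proof -
  have "zip (map (\<lambda>a. d * a) (map fst t)) (map snd t) = scale d t"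
    by (induction t) auto
  moreover have "axiom (Iff (Ge (zip (map fst t) (map snd t)) c)
      (Ge (zip (map (\<lambda>a. d * a) (map fst t)) (map snd t)) (d * c)))"
    using assms by (intro axiom.F5) auto
  ultimately show ?thesis
    by (simp add: zip_map_fst_snd provable.Ax)
qed

lemma provable_perm: "t \<noteq> [] \<Longrightarrow> mset t' = mset t \<Longrightarrow> provable (Imp (Ge t c) (Ge t' c))"
  by (intro provable_IffD1 provable.Ax axiom.F3)

lemma provable_pad:
  assumes "t \<noteq> []"
  shows "provable (Iff (Ge t c) (Ge (t @ zeros ws) c))"
proof (induction ws rule: rev_induct)
  case Nil
  show ?case
    using assms by (intro provable_tautology) auto
next
  case (snoc w ws)
  have "provable (Iff (Ge (t @ zeros ws) c) (Ge ((t @ zeros ws) @ [(0, w)]) c))"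
    using assms by (intro provable.Ax axiom.F2) simp
  with snoc show ?case
    by (intro provable_consequence[of "[Iff (Ge t c) (Ge (t @ zeros ws) c),
      Iff (Ge (t @ zeros ws) c) (Ge ((t @ zeros ws) @ [(0, w)]) c)]"]) (auto simp: assms)
qed

lemma provable_opposite: "provable (Ge [(b, v), (- b, v)] 0)"
proof -
  have F1: "provable (Ge [(1, v), (- 1, v)] 0)"
    by (intro provable.Ax axiom.F1)
  have scaled: "provable (Ge [(k, v), (- k, v)] 0)" if "k > 0" for k
    using provable.MP[OF F1 provable_IffD1[OF provable_scale_iff[of _ k 0]]] that by simp
  consider "b > 0" | "b < 0" | "b = 0" by linarith
  then show ?thesis
  proof cases
    case 1
    then show ?thesis by (rule scaled)
  next
    case 2
    then show ?thesis
      using provable.MP[OF scaled[of "- b"] provable_perm] by simp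
  next
    case 3
    have "provable (Ge [(- 1, v), (1, v)] 0)"
      using provable.MP[OF F1 provable_perm] by simp
    moreover have "provable (Imp (Conj (Ge [(1, v), (- 1, v)] 0) (Ge [(- 1, v), (1, v)] 0))
        (Ge [(0, v), (0, v)] 0))"
      using provable_add_aligned[of "[(1, v), (- 1, v)]" "[(- 1, v), (1, v)]" 0 0] by simp
    ultimately have "provable (Imp (Ge [(1, v), (- 1, v)] 0) (Ge [(0, v), (0, v)] 0))"
      by (rule provable_imp_discharge)
    then show ?thesis
      using provable.MP[OF F1] 3 by simp
  qed
qed

lemma provable_split_coeff: "provable (Imp (Ge ((a + b, v) # t) c) (Ge ((a, v) # (b, v) # t) c))"
proof -
  have pad: "provable (Imp (Ge ((a + b, v) # t) c) (Ge (((a + b, v) # t) @ zeros [v]) c))"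
    by (intro provable_IffD1 provable_pad) simp
  have perm: "provable (Imp (Ge (((a + b, v) # t) @ zeros [v]) c) (Ge ((a + b, v) # (0, v) # t) c))"
    by (intro provable_perm) auto
  have "provable (Imp (Ge [(- b, v), (b, v)] 0) (Ge ([(- b, v), (b, v)] @ zeros (map snd t)) 0))"
    by (intro provable_IffD1 provable_pad) simp
  then have opp: "provable (Ge ((- b, v) # (b, v) # zeros (map snd t)) 0)"
    using provable.MP[OF provable_opposite[of "- b" v]] by simp
  have eq: "add_aligned ((a + b, v) # (0, v) # t) ((- b, v) # (b, v) # zeros (map snd t)) = (a, v) # (b, v) # t"
    by simp
  have "provable (Imp (Conj (Ge ((a + b, v) # (0, v) # t) c) (Ge ((- b, v) # (b, v) # zeros (map snd t)) 0))
      (Ge (add_aligned ((a + b, v) # (0, v) # t) ((- b, v) # (b, v) # zeros (map snd t))) (c + 0)))"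
    by (intro provable_add_aligned) auto
  then have "provable (Imp (Conj (Ge ((a + b, v) # (0, v) # t) c) (Ge ((- b, v) # (b, v) # zeros (map snd t)) 0))
      (Ge ((a, v) # (b, v) # t) c))"
    by (simp only: eq add_0_right)
  then show ?thesis
    using provable_imp_trans[OF provable_imp_trans[OF pad perm] provable_imp_discharge[OF opp]] by blast
qed

lemma provable_zero_singleton: "provable (Ge [(0, v)] 0)"
proof -
  have "provable (Ge ([(0, v)] @ zeros [v]) 0)"
    using provable_opposite[of 0 v] by simp
  then show ?thesis
    using provable.MP provable_IffD2[OF provable_pad[of "[(0, v)]" 0 "[v]"]] by blast
qed

lemma provable_zero_Cons:
  assumes "r \<noteq> []"
  shows "provable (Imp (Ge r c) (Ge ((0, v) # r) c))"
proof (rule provable_imp_trans)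
  show "provable (Imp (Ge r c) (Ge (r @ zeros [v]) c))"
    using assms by (intro provable_IffD1 provable_pad)
  show "provable (Imp (Ge (r @ zeros [v]) c) (Ge ((0, v) # r) c))"
    using assms by (intro provable_perm) auto
qed

lemma provable_zero_form: "t \<noteq> [] \<Longrightarrow> coeff t = (\<lambda>_. 0) \<Longrightarrow> provable (Ge t 0)"
proof (induction t rule: length_induct)
  case (1 t)
  then obtain a v r where t: "t = (a, v) # r"
    by (metis list.exhaust prod.exhaust)
  show ?case
  proof (cases "v \<in> snd ` set r")
    case True
    then obtain b where "(b, v) \<in> set r"
      by auto
    then have mset_r: "mset r = mset ((b, v) # remove1 (b, v) r)"
      by simp
    let ?merged = "(a + b, v) # remove1 (b, v) r"
    have "coeff ?merged = coeff ((a, v) # (b, v) # remove1 (b, v) r)"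
      by (simp add: fun_eq_iff algebra_simps)
    also have "\<dots> = coeff t"
      using coeff_mset[OF mset_r] by (simp add: t fun_eq_iff)
    finally have "coeff ?merged = (\<lambda>_. 0)"
      using 1(3) by simp
    moreover have "length ?merged < length t"
      using \<open>(b, v) \<in> set r\<close> using length_pos_if_in_set by (fastforce simp: t length_remove1)
    ultimately have "provable (Ge ?merged 0)"
      using 1(1) by blast
    then have "provable (Ge ((a, v) # (b, v) # remove1 (b, v) r) 0)"
      using provable.MP provable_split_coeff by blast
    moreover have "mset t = mset ((a, v) # (b, v) # remove1 (b, v) r)"
      using mset_r by (simp add: t)
    ultimately show ?thesis
      using provable.MP provable_perm[of _ t] by blast
  next
    case False
    then have "coeff r v = 0"
      using coeff_nonzero_occurs by blast
    then have "a = 0"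
      using fun_cong[OF 1(3), of v] by (simp add: t)
    then have coeff_r: "coeff r = (\<lambda>_. 0)"
      using 1(3) by (simp add: t)
    show ?thesis
    proof (cases "r = []")
      case True
      then show ?thesis
        using provable_zero_singleton by (simp add: t \<open>a = 0\<close>)
    next
      case False
      then have "provable (Ge r 0)"
        using 1(1) coeff_r by (simp add: t)
      then have "provable (Ge ((0, v) # r) 0)"
        using provable.MP provable_zero_Cons[OF False] by blast
      then show ?thesis
        by (simp add: t \<open>a = 0\<close>)
    qed
  qed
qed

lemma provable_coeff_eq:
  assumes "t \<noteq> []" and "u \<noteq> []" and "coeff u = coeff t"
  shows "provable (Imp (Ge t c) (Ge u c))"
proof -
  have pad: "provable (Imp (Ge t c) (Ge (t @ zeros (map snd u)) c))"
    using assms(1) by (intro provable_IffD1 provable_pad)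
  have diff: "provable (Ge (scale (- 1) t @ u) 0)"
    using assms by (intro provable_zero_form) (auto simp: fun_eq_iff)
  have "provable (Imp (Conj (Ge (t @ zeros (map snd u)) c) (Ge (scale (- 1) t @ u) 0))
      (Ge (add_aligned (t @ zeros (map snd u)) (scale (- 1) t @ u)) (c + 0)))"
    using assms(1) by (intro provable_add_aligned) auto
  moreover have "add_aligned (t @ zeros (map snd u)) (scale (- 1) t @ u) = zeros (map snd t) @ u"
    by (simp add: add_aligned_append)
  ultimately have cancel: "provable (Imp (Conj (Ge (t @ zeros (map snd u)) c) (Ge (scale (- 1) t @ u) 0))
      (Ge (zeros (map snd t) @ u) c))"
    by simp
  have perm: "provable (Imp (Ge (zeros (map snd t) @ u) c) (Ge (u @ zeros (map snd t)) c))"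
    using assms by (intro provable_perm) auto
  have unpad: "provable (Imp (Ge (u @ zeros (map snd t)) c) (Ge u c))"
    using assms(2) by (intro provable_IffD2 provable_pad)
  show ?thesis
    using provable_imp_discharge[OF diff cancel] pad perm unpad provable_imp_trans by blast
qed

lemma provable_add:
  assumes "t \<noteq> []" and "t' \<noteq> []" and "u \<noteq> []" and "coeff u = (\<lambda>v. coeff t v + coeff t' v)"
  shows "provable (Imp (Conj (Ge t c) (Ge t' c')) (Ge u (c + c')))"
proof -
  have pad: "provable (Imp (Ge t c) (Ge (t @ zeros (map snd t')) c))"
    using assms(1) by (intro provable_IffD1 provable_pad)
  have shift: "provable (Imp (Ge t' c') (Ge (zeros (map snd t) @ t') c'))"
    using assms(2) by (intro provable_coeff_eq) (auto simp: fun_eq_iff)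
  have "provable (Imp (Conj (Ge (t @ zeros (map snd t')) c) (Ge (zeros (map snd t) @ t') c'))
      (Ge (add_aligned (t @ zeros (map snd t')) (zeros (map snd t) @ t')) (c + c')))"
    using assms(1) by (intro provable_add_aligned) auto
  moreover have "add_aligned (t @ zeros (map snd t')) (zeros (map snd t) @ t') = t @ t'"
    by (simp add: add_aligned_append)
  ultimately have sum: "provable (Imp (Conj (Ge (t @ zeros (map snd t')) c) (Ge (zeros (map snd t) @ t') c'))
      (Ge (t @ t') (c + c')))"
    by simp
  have "provable (Imp (Ge (t @ t') (c + c')) (Ge u (c + c')))"
    using assms by (intro provable_coeff_eq) (auto simp: fun_eq_iff)
  then show ?thesis
    using provable_imp_trans[OF provable_imp_conj[OF pad shift sum]] by blast
qed

lemma provable_scale: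
  assumes "t \<noteq> []" and "u \<noteq> []" and "d > 0" and "coeff u = (\<lambda>v. d * coeff t v)"
  shows "provable (Imp (Ge t c) (Ge u (d * c)))"
proof (rule provable_imp_trans)
  show "provable (Imp (Ge t c) (Ge (scale d t) (d * c)))"
    using assms by (intro provable_IffD1 provable_scale_iff)
  show "provable (Imp (Ge (scale d t) (d * c)) (Ge u (d * c)))"
    using assms by (intro provable_coeff_eq) (auto simp: fun_eq_iff)
qed

lemma provable_weaken:
  assumes "t \<noteq> []" and "e \<le> c"
  shows "provable (Imp (Ge t c) (Ge t e))"
proof (cases "e = c")
  case True
  then show ?thesis
    using assms by (intro provable_tautology) auto
next
  case False
  then have "provable (Imp (Ge t c) (Gt t e))"
    using assms by (intro provable.Ax axiom.F6) auto
  moreover have "provable (Imp (Gt t e) (Ge t e))"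
    using assms by (intro provable_tautology) (auto simp: Gt_def Le_def)
  ultimately show ?thesis
    by (rule provable_imp_trans)
qed

lemma provable_refute:
  assumes "t \<noteq> []" and "c > 0" and "coeff t = (\<lambda>_. 0)"
  shows "provable (Neg (Ge t c))"
proof -
  have "provable (Imp (Ge t c) (Gt t 0))"
    using assms by (intro provable.Ax axiom.F6)
  then have gt: "provable (Imp (Ge t c) (Conj (Ge t 0) (Neg (Ge (scale (- 1) t) 0))))"
    by (simp add: Gt_def Le_eq_Ge_scale)
  have "provable (Ge (scale (- 1) t) 0)"
    using assms by (intro provable_zero_form) auto
  with gt show ?thesis
    by (intro provable_consequence[of "[Imp (Ge t c) (Conj (Ge t 0) (Neg (Ge (scale (- 1) t) 0))),
      Ge (scale (- 1) t) 0]"]) (auto simp: assms)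
qed

section \<open>Fourier-Motzkin elimination\<close>

definition below :: "bool \<Rightarrow> real \<Rightarrow> real \<Rightarrow> bool" where
  "below s a b \<longleftrightarrow> (if s then a < b else a \<le> b)"

lemma exists_between:
  fixes L U :: "(real \<times> bool) set"
  assumes "finite L" and "finite U"
    and between: "\<And>l s u s'. (l, s) \<in> L \<Longrightarrow> (u, s') \<in> U \<Longrightarrow> below (s \<or> s') l u"
  shows "\<exists>y. (\<forall>(l, s)\<in>L. below s l y) \<and> (\<forall>(u, s)\<in>U. below s y u)"
proof -
  have L_le_Max: "l \<le> Max (fst ` L)" if "(l, s) \<in> L" for l s
    using assms(1) that by (force intro: Max_ge)
  have U_ge_Min: "Min (fst ` U) \<le> u" if "(u, s) \<in> U" for u s
    using assms(2) that by (force intro: Min_le)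
  consider "L = {}" "U = {}" | "L = {}" "U \<noteq> {}" | "L \<noteq> {}" "U = {}" | "L \<noteq> {}" "U \<noteq> {}"
    by blast
  then show ?thesis
  proof cases
    case 1
    then show ?thesis by simp
  next
    case 2
    have "\<forall>(u, s)\<in>U. below s (Min (fst ` U) - 1) u"
      using U_ge_Min by (fastforce simp: below_def)
    with 2 show ?thesis by blast
  next
    case 3
    have "\<forall>(l, s)\<in>L. below s l (Max (fst ` L) + 1)"
      using L_le_Max by (fastforce simp: below_def)
    with 3 show ?thesis by blast
  next
    case 4
    let ?m = "Max (fst ` L)" and ?M = "Min (fst ` U)"
    have "?m \<in> fst ` L" and "?M \<in> fst ` U"
      using assms(1,2) 4 by simp_all
    then obtain sm sM where m: "(?m, sm) \<in> L" and M: "(?M, sM) \<in> U"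
      by force
    have "?m \<le> ?M"
      using between[OF m M] by (simp add: below_def split: if_splits)
    have "below s l ((?m + ?M) / 2)" if "(l, s) \<in> L" for l s
      using between[OF that M] L_le_Max[OF that] \<open>?m \<le> ?M\<close> by (cases s) (auto simp: below_def)
    moreover have "below s ((?m + ?M) / 2) u" if "(u, s) \<in> U" for u s
      using between[OF m that] U_ge_Min[OF that] \<open>?m \<le> ?M\<close> by (cases s) (auto simp: below_def)
    ultimately show ?thesis by blast
  qed
qed

type_synonym ineq = "lterm \<times> real \<times> bool"

definition holds :: "(nat \<Rightarrow> real) \<Rightarrow> ineq \<Rightarrow> bool" where
  "holds x q \<longleftrightarrow> (case q of (t, c, s) \<Rightarrow> below s c (lval t x))"

inductive_set cone :: "ineq set \<Rightarrow> ineq set" for S where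
  basic: "q \<in> S \<Longrightarrow> q \<in> cone S"
| zero: "([], 0, False) \<in> cone S"
| smult: "(t, c, s) \<in> cone S \<Longrightarrow> k > 0 \<Longrightarrow> (scale k t, k * c, s) \<in> cone S"
| add: "(t, c, s) \<in> cone S \<Longrightarrow> (t', c', s') \<in> cone S \<Longrightarrow> (t @ t', c + c', s \<or> s') \<in> cone S"

definition vars :: "ineq set \<Rightarrow> nat set" where
  "vars S = {v. \<exists>q\<in>S. coeff (fst q) v \<noteq> 0}"

definition combine :: "nat \<Rightarrow> ineq \<Rightarrow> ineq \<Rightarrow> ineq" where
  "combine v p n = (case (p, n) of ((tp, cp, sp), (tn, cn, sn)) \<Rightarrow>
     (scale (- coeff tn v) tp @ scale (coeff tp v) tn, - coeff tn v * cp + coeff tp v * cn, sp \<or> sn))"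

definition eliminate :: "nat \<Rightarrow> ineq set \<Rightarrow> ineq set" where
  "eliminate v S = {q\<in>S. coeff (fst q) v = 0} \<union>
     (\<lambda>(p, n). combine v p n) ` ({p\<in>S. coeff (fst p) v > 0} \<times> {n\<in>S. coeff (fst n) v < 0})"

(* The value of x v at which q becomes tight; only used where coeff t v \<noteq> 0. *)
definition threshold :: "(nat \<Rightarrow> real) \<Rightarrow> nat \<Rightarrow> ineq \<Rightarrow> real" where
  "threshold x v q = (case q of (t, c, s) \<Rightarrow> x v + (c - lval t x) / coeff t v)"

lemma cone_mono: "q \<in> cone S' \<Longrightarrow> S' \<subseteq> cone S \<Longrightarrow> q \<in> cone S"
  by (induction rule: cone.induct) (auto intro: cone.intros)

lemma finite_vars: "finite S \<Longrightarrow> finite (vars S)"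
proof -
  assume "finite S"
  moreover have "vars S \<subseteq> (\<Union>q\<in>S. snd ` set (fst q))"
    unfolding vars_def using coeff_nonzero_occurs by blast
  ultimately show ?thesis
    by (meson List.finite_set finite_UN_I finite_imageI finite_subset)
qed

lemma finite_eliminate: "finite S \<Longrightarrow> finite (eliminate v S)"
  unfolding eliminate_def by auto

lemma combine_in_cone:
  assumes "(tp, cp, sp) \<in> S" and "(tn, cn, sn) \<in> S" and "coeff tp v > 0" and "coeff tn v < 0"
  shows "combine v (tp, cp, sp) (tn, cn, sn) \<in> cone S"
proof -
  have "(scale (- coeff tn v) tp, - coeff tn v * cp, sp) \<in> cone S"
    using assms by (intro cone.smult cone.basic) auto
  moreover have "(scale (coeff tp v) tn, coeff tp v * cn, sn) \<in> cone S"
    using assms by (intro cone.smult cone.basic) auto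
  ultimately show ?thesis
    unfolding combine_def prod.case by (rule cone.add)
qed

lemma eliminate_subset_cone: "eliminate v S \<subseteq> cone S"
  unfolding eliminate_def by (auto intro: cone.basic combine_in_cone)

lemma vars_eliminate: "vars (eliminate v S) \<subseteq> vars S - {v}"
proof
  fix w
  assume "w \<in> vars (eliminate v S)"
  then obtain q where q: "q \<in> eliminate v S" "coeff (fst q) w \<noteq> 0"
    unfolding vars_def by auto
  then consider "q \<in> S" "coeff (fst q) v = 0"
    | p n where "p \<in> S" "n \<in> S" "coeff (fst p) v > 0" "coeff (fst n) v < 0" "q = combine v p n"
    unfolding eliminate_def by auto
  then show "w \<in> vars S - {v}"
  proof cases
    case 1
    then show ?thesis
      using q unfolding vars_def by force
  next
    case 2
    obtain tp cp sp tn cn sn where pn: "p = (tp, cp, sp)" "n = (tn, cn, sn)"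
      by (cases p, cases n) auto
    have coeff_q: "coeff (fst q) u = - coeff tn v * coeff tp u + coeff tp v * coeff tn u" for u
      using 2 pn by (simp add: combine_def)
    have "w \<noteq> v"
      using q(2) coeff_q[of v] by auto
    moreover have "coeff tp w \<noteq> 0 \<or> coeff tn w \<noteq> 0"
      using q(2) coeff_q[of w] by auto
    ultimately show ?thesis
      using 2 pn unfolding vars_def by force
  qed
qed

lemma holds_upd_pos:
  "coeff t v > 0 \<Longrightarrow> holds (x(v := y)) (t, c, s) \<longleftrightarrow> below s (threshold x v (t, c, s)) y"
  by (auto simp: holds_def below_def threshold_def lval_upd field_simps)

lemma holds_upd_neg:
  "coeff t v < 0 \<Longrightarrow> holds (x(v := y)) (t, c, s) \<longleftrightarrow> below s y (threshold x v (t, c, s))"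
  by (auto simp: holds_def below_def threshold_def lval_upd field_simps)

lemma holds_combine:
  assumes "coeff tp v > 0" and "coeff tn v < 0"
  shows "holds x (combine v (tp, cp, sp) (tn, cn, sn)) \<longleftrightarrow>
    below (sp \<or> sn) (threshold x v (tp, cp, sp)) (threshold x v (tn, cn, sn))"
  using assms by (auto simp: holds_def below_def threshold_def combine_def field_simps)

lemma fourier_motzkin_extend:
  assumes "finite S" and eliminate_holds: "\<forall>q\<in>eliminate v S. holds x q"
  shows "\<exists>y. \<forall>q\<in>S. holds (x(v := y)) q"
proof -
  let ?bound = "\<lambda>q. (threshold x v q, snd (snd q))"
  let ?L = "?bound ` {q\<in>S. coeff (fst q) v > 0}" and ?U = "?bound ` {q\<in>S. coeff (fst q) v < 0}"
  have "below (s \<or> s') l u" if lower: "(l, s) \<in> ?L" and upper: "(u, s') \<in> ?U" for l s u s'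
  proof -
    obtain p n where p: "p \<in> S" "coeff (fst p) v > 0" "(l, s) = ?bound p"
      and n: "n \<in> S" "coeff (fst n) v < 0" "(u, s') = ?bound n"
      using lower upper by blast
    obtain tp cp tn cn where pn: "p = (tp, cp, s)" "n = (tn, cn, s')"
      using p(3) n(3) by (cases p, cases n) auto
    have "combine v p n \<in> eliminate v S"
      unfolding eliminate_def using p n by blast
    then show ?thesis
      using eliminate_holds holds_combine[of tp v tn x cp s cn s'] p n pn by auto
  qed
  then obtain y where y: "\<forall>(l, s)\<in>?L. below s l y" "\<forall>(u, s)\<in>?U. below s y u"
    using exists_between[of ?L ?U] assms(1) by auto
  have "holds (x(v := y)) (t, c, s)" if q: "(t, c, s) \<in> S" for t c s
  proof -
    consider "coeff t v > 0" | "coeff t v < 0" | "coeff t v = 0"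
      by linarith
    then show ?thesis
    proof cases
      case 1
      then show ?thesis
        using y(1) q holds_upd_pos by fastforce
    next
      case 2
      then show ?thesis
        using y(2) q holds_upd_neg by fastforce
    next
      case 3
      then have "holds x (t, c, s)"
        using q eliminate_holds unfolding eliminate_def by auto
      then show ?thesis
        using 3 by (simp add: holds_def lval_upd)
    qed
  qed
  then have "\<forall>q\<in>S. holds (x(v := y)) q"
    by (metis prod_cases3)
  then show ?thesis by blast
qed

theorem motzkin_transposition:
  assumes "finite S" and "\<nexists>x. \<forall>q\<in>S. holds x q"
  shows "\<exists>t c s. (t, c, s) \<in> cone S \<and> coeff t = (\<lambda>_. 0) \<and> (0 < c \<or> 0 \<le> c \<and> s)"
  using assms
proof (induction "card (vars S)" arbitrary: S rule: less_induct)
  case less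
  show ?case
  proof (cases "vars S = {}")
    case True
    obtain t c s where q: "(t, c, s) \<in> S" "\<not> holds (\<lambda>_. 0) (t, c, s)"
      using less.prems(2) by (metis prod_cases3)
    have "coeff t = (\<lambda>_. 0)"
      using True q(1) unfolding vars_def by force
    moreover have "0 < c \<or> 0 \<le> c \<and> s"
      using q(2) by (auto simp: holds_def below_def split: if_splits)
    ultimately show ?thesis
      using cone.basic[OF q(1)] by blast
  next
    case False
    then obtain v where v: "v \<in> vars S"
      by auto
    have "card (vars (eliminate v S)) < card (vars S)"
      using vars_eliminate[of v S] v by (intro psubset_card_mono finite_vars less.prems(1)) blast
    moreover have "\<nexists>x. \<forall>q\<in>eliminate v S. holds x q"
      using fourier_motzkin_extend[OF less.prems(1)] less.prems(2) by blast
    ultimately obtain t c s where "(t, c, s) \<in> cone (eliminate v S)" "coeff t = (\<lambda>_. 0)" "0 < c \<or> 0 \<le> c \<and> s"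
      using less.hyps finite_eliminate[OF less.prems(1)] by blast
    then show ?thesis
      using cone_mono eliminate_subset_cone by blast
  qed
qed

definition nonstrict :: "(lterm \<times> real) list \<Rightarrow> ineq set" where
  "nonstrict P = (\<lambda>(t, c). (t, c, False)) ` set P"

definition ineqs :: "(lterm \<times> real) list \<Rightarrow> fm list" where
  "ineqs P = map (\<lambda>(t, c). Ge t c) P"

lemma cone_nonstrict: "(t, c, s) \<in> cone (nonstrict P) \<Longrightarrow> \<not> s"
  by (induction rule: cone.induct[split_format(complete)]) (auto simp: nonstrict_def)

lemma cone_insert_decompose:
  assumes "(t, c, s) \<in> cone (insert (t0, c0, s0) S)"
  shows "\<exists>t' c' s' \<mu>. (t', c', s') \<in> cone S \<and> \<mu> \<ge> 0 \<and> coeff t = (\<lambda>v. coeff t' v + \<mu> * coeff t0 v)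
    \<and> c = c' + \<mu> * c0 \<and> (s \<longleftrightarrow> s' \<or> \<mu> > 0 \<and> s0)"
  using assms
proof (induction rule: cone.induct[split_format(complete)])
  case (basic t c s)
  then consider "(t, c, s) = (t0, c0, s0)" | "(t, c, s) \<in> S"
    by blast
  then show ?case
  proof cases
    case 1
    show ?thesis
      by (rule exI[of _ "[]"], rule exI[of _ 0], rule exI[of _ False], rule exI[of _ 1])
        (use 1 in \<open>auto intro: cone.zero\<close>)
  next
    case 2
    show ?thesis
      by (rule exI[of _ t], rule exI[of _ c], rule exI[of _ s], rule exI[of _ 0])
        (use 2 in \<open>auto intro: cone.basic\<close>)
  qed
next
  case zero
  show ?case
    by (rule exI[of _ "[]"], rule exI[of _ 0], rule exI[of _ False], rule exI[of _ 0]) (auto intro: cone.zero)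
next
  case (smult t c s k)
  then obtain t' c' s' \<mu> where IH: "(t', c', s') \<in> cone S" "\<mu> \<ge> 0"
    "coeff t = (\<lambda>v. coeff t' v + \<mu> * coeff t0 v)" "c = c' + \<mu> * c0" "s \<longleftrightarrow> s' \<or> \<mu> > 0 \<and> s0"
    by blast
  have scaled: "(scale k t', k * c', s') \<in> cone S"
    using IH(1) smult.hyps(2) by (rule cone.smult)
  show ?case
    by (rule exI[of _ "scale k t'"], rule exI[of _ "k * c'"], rule exI[of _ s'], rule exI[of _ "k * \<mu>"])
      (use scaled IH smult.hyps(2) in \<open>auto simp: algebra_simps fun_eq_iff zero_less_mult_iff\<close>)
next
  case (add t1 c1 s1 t2 c2 s2)
  obtain t1' c1' s1' \<mu>1 where 1: "(t1', c1', s1') \<in> cone S" "\<mu>1 \<ge> 0"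
    "coeff t1 = (\<lambda>v. coeff t1' v + \<mu>1 * coeff t0 v)" "c1 = c1' + \<mu>1 * c0" "s1 \<longleftrightarrow> s1' \<or> \<mu>1 > 0 \<and> s0"
    using add.IH(1) by blast
  obtain t2' c2' s2' \<mu>2 where 2: "(t2', c2', s2') \<in> cone S" "\<mu>2 \<ge> 0"
    "coeff t2 = (\<lambda>v. coeff t2' v + \<mu>2 * coeff t0 v)" "c2 = c2' + \<mu>2 * c0" "s2 \<longleftrightarrow> s2' \<or> \<mu>2 > 0 \<and> s0"
    using add.IH(2) by blast
  show ?case
    by (rule exI[of _ "t1' @ t2'"], rule exI[of _ "c1' + c2'"], rule exI[of _ "s1' \<or> s2'"], rule exI[of _ "\<mu>1 + \<mu>2"])
      (use 1 2 in \<open>auto intro: cone.add simp: algebra_simps fun_eq_iff\<close>)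
qed

lemma provable_from_cone:
  assumes "(t, c, s) \<in> cone (nonstrict P)" and ne: "\<forall>(t, c)\<in>set P. t \<noteq> []"
    and "u \<noteq> []" and "coeff u = coeff t"
  shows "provable_from (ineqs P) (Ge u c)"
proof -
  have wff_hyps: "\<forall>h\<in>set (ineqs P). wff h"
    using ne by (auto simp: ineqs_def)
  (* t itself may be [], so the induction hypotheses are used for the nonempty t @ [(0, 0)] *)
  from assms(1,3,4) show ?thesis
  proof (induction arbitrary: u rule: cone.induct[split_format(complete)])
    case (basic t c s)
    then have "Ge t c \<in> set (ineqs P)" and "t \<noteq> []"
      using ne by (auto simp: nonstrict_def ineqs_def)
    then show ?case
      using basic.prems wff_hyps provable_from_hyp provable_from_mp provable_coeff_eq by metis
  next
    case zero
    then show ?case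
      using wff_hyps by (intro provable_from_provable provable_zero_form) auto
  next
    case (smult t c s k)
    have "provable_from (ineqs P) (Ge (t @ [(0, 0)]) c)"
      using smult.IH by (simp add: fun_eq_iff)
    moreover have "provable (Imp (Ge (t @ [(0, 0)]) c) (Ge u (k * c)))"
      using smult by (intro provable_scale) (auto simp: fun_eq_iff)
    ultimately show ?case
      by (rule provable_from_mp)
  next
    case (add t1 c1 s1 t2 c2 s2)
    have "provable_from (ineqs P) (Ge (t1 @ [(0, 0)]) c1)" and "provable_from (ineqs P) (Ge (t2 @ [(0, 0)]) c2)"
      using add.IH by (simp_all add: fun_eq_iff)
    moreover have "provable (Imp (Conj (Ge (t1 @ [(0, 0)]) c1) (Ge (t2 @ [(0, 0)]) c2)) (Ge u (c1 + c2)))"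
      using add.prems by (intro provable_add) (auto simp: fun_eq_iff)
    ultimately show ?case
      by (rule provable_from_mp2)
  qed
qed

theorem provable_from_entailed:
  assumes ne: "\<forall>(t, c)\<in>set P. t \<noteq> []" and "s \<noteq> []"
    and entailed: "\<And>x. \<forall>(t, c)\<in>set P. c \<le> lval t x \<Longrightarrow> d \<le> lval s x"
  shows "provable_from (ineqs P) (Ge s d)"
proof -
  (* the negated conclusion enters as the strict inequality -s > -d *)
  let ?S = "insert (scale (- 1) s, - d, True) (nonstrict P)"
  have "\<nexists>x. \<forall>q\<in>?S. holds x q"
    using entailed by (fastforce simp: holds_def below_def nonstrict_def)
  then obtain t c st where cert: "(t, c, st) \<in> cone ?S" "coeff t = (\<lambda>_. 0)" "0 < c \<or> 0 \<le> c \<and> st"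
    using motzkin_transposition[of ?S] by (auto simp: nonstrict_def)
  then obtain t' c' s' \<mu> where dec: "(t', c', s') \<in> cone (nonstrict P)" "\<mu> \<ge> 0"
    "coeff t = (\<lambda>v. coeff t' v + \<mu> * coeff (scale (- 1) s) v)" "c = c' + \<mu> * - d" "st \<longleftrightarrow> s' \<or> \<mu> > 0"
    using cone_insert_decompose[OF cert(1)] by auto
  have coeff_t': "coeff t' = (\<lambda>v. \<mu> * coeff s v)"
    using cert(2) dec(3) by (auto simp: fun_eq_iff dest: fun_cong)
  show ?thesis
  proof (cases "\<mu> > 0")
    case True
    have "provable_from (ineqs P) (Ge (scale \<mu> s) c')"
      using provable_from_cone[OF dec(1) ne] coeff_t' \<open>s \<noteq> []\<close> by (simp add: fun_eq_iff)
    moreover have "provable (Imp (Ge (scale \<mu> s) c') (Ge s ((1 / \<mu>) * c')))"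
      using True \<open>s \<noteq> []\<close> by (intro provable_scale) (auto simp: fun_eq_iff)
    moreover have "provable (Imp (Ge s ((1 / \<mu>) * c')) (Ge s d))"
      using \<open>s \<noteq> []\<close> by (rule provable_weaken) (use True cert(3) dec(4) in \<open>auto simp: field_simps\<close>)
    ultimately show ?thesis
      using provable_from_mp by blast
  next
    case False
    (* then P alone is contradictory *)
    then have "c' > 0" and "coeff t' = (\<lambda>_. 0)"
      using cert(3) dec(2,4,5) cone_nonstrict[OF dec(1)] coeff_t' by auto
    then have "provable_from (ineqs P) (Ge [(0, 0)] c')" and "provable (Neg (Ge [(0, 0)] c'))"
      using provable_from_cone[OF dec(1) ne] by (auto intro: provable_refute simp: fun_eq_iff)
    moreover have wff_hyps: "\<forall>h\<in>set (ineqs P). wff h"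
      using ne by (auto simp: ineqs_def)
    ultimately show ?thesis
      using \<open>s \<noteq> []\<close> provable_from_provable
      by (intro provable_from_consequence[of "[Ge [(0, 0)] c', Neg (Ge [(0, 0)] c')]"]) auto
  qed
qed

section \<open>Completeness\<close>

definition lit :: "bool \<times> lterm \<times> real \<Rightarrow> fm" where
  "lit l = (case l of (b, t, c) \<Rightarrow> if b then Ge t c else Neg (Ge t c))"

definition positives :: "(bool \<times> lterm \<times> real) list \<Rightarrow> (lterm \<times> real) list" where
  "positives L = map snd (filter fst L)"

definition negatives :: "(bool \<times> lterm \<times> real) list \<Rightarrow> (lterm \<times> real) list" where
  "negatives L = map snd (filter (Not \<circ> fst) L)"

lemma sat_feval: "sat D \<sigma> f = feval (\<lambda>t c. sat D \<sigma> (Ge t c)) f"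
  by (induction f) auto

lemma wff_atoms: "wff f \<Longrightarrow> \<forall>(t, c)\<in>set (atoms f). t \<noteq> []"
  by (induction f) auto

lemma wff_lits: "\<forall>(b, t, c)\<in>set L. t \<noteq> [] \<Longrightarrow> \<forall>h\<in>set (map lit L). wff h"
  by (auto simp: lit_def)

lemma provable_from_mono:
  "provable_from H g \<Longrightarrow> set H \<subseteq> set H' \<Longrightarrow> \<forall>h\<in>set H'. wff h \<Longrightarrow> provable_from H' g"
  by (rule provable_consequence[of "[foldr Imp H g]"]) (auto dest: provable_wff)

lemma sat_literals_at_points:
  fixes L :: "(bool \<times> lterm \<times> real) list" and g :: "nat \<Rightarrow> 'd"
  defines "N \<equiv> negatives L"
  assumes "inj g"
    and pos: "\<And>i t c. i \<le> length N \<Longrightarrow> (t, c) \<in> set (positives L) \<Longrightarrow> c \<le> lval t (point i)"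
    and neg: "\<And>j. j < length N \<Longrightarrow> lval (fst (N ! j)) (point (Suc j)) < snd (N ! j)"
  shows "\<forall>l\<in>set L. sat (g ` {..length N}) (\<lambda>v y. point (inv g y) v) (lit l)"
proof -
  have tval_g: "tval t (\<lambda>v y. point (inv g y) v) (g i) = lval t (point i)" for t i
    by (simp add: tval_lval inv_f_f[OF \<open>inj g\<close>])
  have "sat (g ` {..length N}) (\<lambda>v y. point (inv g y) v) (lit (b, t, c))" if l: "(b, t, c) \<in> set L"
    for b t c
  proof (cases b)
    case True
    then have "(t, c) \<in> set (positives L)"
      using l by (force simp: positives_def)
    then show ?thesis
      using True pos by (auto simp: lit_def tval_g)
  next
    case False
    then have "(t, c) \<in> set N"
      using l by (force simp: negatives_def N_def)
    then obtain j where j: "j < length N" "N ! j = (t, c)"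
      by (metis in_set_conv_nth)
    then have "tval t (\<lambda>v y. point (inv g y) v) (g (Suc j)) < c"
      using neg[OF j(1)] by (simp add: tval_g)
    moreover have "g (Suc j) \<in> g ` {..length N}"
      using j by simp
    ultimately show ?thesis
      using False by (auto simp: lit_def not_le)
  qed
  then show ?thesis
    by (metis prod_cases3)
qed

lemma sat_literals_if_feasible:
  fixes L :: "(bool \<times> lterm \<times> real) list"
  defines "feasible x \<equiv> \<forall>(t, c)\<in>set (positives L). c \<le> lval t x"
  assumes "infinite (UNIV :: 'd set)" and "\<exists>x. feasible x"
    and "\<forall>(s, d)\<in>set (negatives L). \<exists>x. feasible x \<and> lval s x < d"
  shows "\<exists>(D :: 'd set) \<sigma>. D \<noteq> {} \<and> (\<forall>l\<in>set L. sat D \<sigma> (lit l))"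
proof -
  let ?N = "negatives L"
  obtain x0 where x0: "feasible x0"
    using assms(3) by blast
  have "\<exists>x. feasible x \<and> lval (fst (?N ! j)) x < snd (?N ! j)" if "j < length ?N" for j
  proof -
    obtain s d where sd: "?N ! j = (s, d)"
      by (cases "?N ! j")
    then have "(s, d) \<in> set ?N"
      using nth_mem[OF that] by simp
    then show ?thesis
      using assms(4) sd by auto
  qed
  then have witnesses: "\<forall>j. \<exists>x. j < length ?N \<longrightarrow> feasible x \<and> lval (fst (?N ! j)) x < snd (?N ! j)"
    by blast
  obtain X where X: "\<And>j. j < length ?N \<Longrightarrow> feasible (X j) \<and> lval (fst (?N ! j)) (X j) < snd (?N ! j)"
    using choice[OF witnesses] by blast
  obtain g :: "nat \<Rightarrow> 'd" where "inj g"
    using infinite_countable_subset[OF assms(2)] by blast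
  define point where "point i = (if i = 0 then x0 else X (i - 1))" for i
  have feasible_point: "feasible (point i)" if "i \<le> length ?N" for i
    using x0 X that by (auto simp: point_def)
  show ?thesis
  proof (intro exI conjI)
    show "g ` {..length ?N} \<noteq> {}"
      by simp
    show "\<forall>l\<in>set L. sat (g ` {..length ?N}) (\<lambda>v y. point (inv g y) v) (lit l)"
    proof (rule sat_literals_at_points[OF \<open>inj g\<close>])
      show "c \<le> lval t (point i)" if "i \<le> length ?N" and "(t, c) \<in> set (positives L)" for i t c
        using feasible_point[OF that(1)] that(2) unfolding feasible_def by blast
      show "lval (fst (?N ! j)) (point (Suc j)) < snd (?N ! j)" if "j < length ?N" for j
        using X[OF that] by (simp add: point_def)
    qed
  qed
qed

lemma provable_from_unsat_literals:
  fixes L :: "(bool \<times> lterm \<times> real) list"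
  assumes "infinite (UNIV :: 'd set)" and ne: "\<forall>(b, t, c)\<in>set L. t \<noteq> []"
    and unsat: "\<nexists>(D :: 'd set) \<sigma>. D \<noteq> {} \<and> (\<forall>l\<in>set L. sat D \<sigma> (lit l))"
    and "wff g"
  shows "provable_from (map lit L) g"
proof -
  let ?P = "positives L"
  have ne_P: "\<forall>(t, c)\<in>set ?P. t \<noteq> []"
    using ne by (auto simp: positives_def)
  have wff_L: "\<forall>h\<in>set (map lit L). wff h"
    using ne by (rule wff_lits)
  have P_hyps: "set (ineqs ?P) \<subseteq> set (map lit L)"
    by (force simp: ineqs_def positives_def lit_def)
  have entailed: "provable_from (map lit L) (Ge s d)"
    if "s \<noteq> []" and "\<And>x. \<forall>(t, c)\<in>set ?P. c \<le> lval t x \<Longrightarrow> d \<le> lval s x" for s d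
    using provable_from_mono[OF provable_from_entailed[OF ne_P that] P_hyps wff_L] .
  have "\<not> ((\<exists>x. \<forall>(t, c)\<in>set ?P. c \<le> lval t x) \<and>
      (\<forall>(s, d)\<in>set (negatives L). \<exists>x. (\<forall>(t, c)\<in>set ?P. c \<le> lval t x) \<and> lval s x < d))"
    using sat_literals_if_feasible[OF assms(1)] unsat by blast
  then consider (infeasible) "\<And>x. \<not> (\<forall>(t, c)\<in>set ?P. c \<le> lval t x)"
    | (negative) s d where "(s, d) \<in> set (negatives L)"
      "\<And>x. \<forall>(t, c)\<in>set ?P. c \<le> lval t x \<Longrightarrow> d \<le> lval s x"
    by (auto simp: not_less) blast
  then show ?thesis
  proof cases
    case infeasible
    then have "provable_from (map lit L) (Ge [(0, 0)] 1)"
      by (intro entailed) auto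
    moreover have "provable_from (map lit L) (Neg (Ge [(0, 0)] 1))"
      using wff_L by (intro provable_from_provable provable_refute) (auto simp: fun_eq_iff)
    ultimately show ?thesis
      using wff_L \<open>wff g\<close>
      by (intro provable_from_consequence[of "[Ge [(0, 0)] 1, Neg (Ge [(0, 0)] 1)]"]) auto
  next
    case negative
    then have "(False, s, d) \<in> set L" and "s \<noteq> []"
      using ne by (auto simp: negatives_def)
    then have "provable_from (map lit L) (Neg (Ge s d))"
      using wff_L by (intro provable_from_hyp) (force simp: lit_def)
    moreover have "provable_from (map lit L) (Ge s d)"
      using negative \<open>s \<noteq> []\<close> by (intro entailed)
    ultimately show ?thesis
      using wff_L \<open>wff g\<close>
      by (intro provable_from_consequence[of "[Ge s d, Neg (Ge s d)]"]) auto
  qed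
qed

lemma provable_from_literals:
  fixes L :: "(bool \<times> lterm \<times> real) list"
  assumes "wff f" and "valid TYPE('d) f" and "infinite (UNIV :: 'd set)"
    and ne: "\<forall>(b, t, c)\<in>set L. t \<noteq> []" and atoms: "set (atoms f) \<subseteq> snd ` set L"
  shows "provable_from (map lit L) f"
proof (cases "\<exists>(D :: 'd set) \<sigma>. D \<noteq> {} \<and> (\<forall>l\<in>set L. sat D \<sigma> (lit l))")
  case True
  then obtain D :: "'d set" and \<sigma> where D: "D \<noteq> {}" "\<forall>l\<in>set L. sat D \<sigma> (lit l)"
    by blast
  let ?\<gamma> = "\<lambda>t c. sat D \<sigma> (Ge t c)"
  have "feval \<beta> f" if lits: "\<forall>l\<in>set L. feval \<beta> (lit l)" for \<beta>
  proof -
    have "\<beta> t c = ?\<gamma> t c" if atom: "(t, c) \<in> set (atoms f)" for t c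
    proof -
      obtain b where "(b, t, c) \<in> set L"
        using atoms atom by force
      then have "feval \<beta> (lit (b, t, c))" and "feval ?\<gamma> (lit (b, t, c))"
        using lits D(2) sat_feval[of D \<sigma> "lit (b, t, c)"] by auto
      then show ?thesis
        by (cases b) (auto simp: lit_def)
    qed
    then have "feval \<beta> f = feval ?\<gamma> f"
      by (intro feval_cong) auto
    also have "\<dots>"
      using assms(2) D(1) sat_feval[of D \<sigma> f] unfolding valid_def by blast
    finally show ?thesis .
  qed
  then show ?thesis
    using assms(1) wff_lits[OF ne] by (intro provable_tautology) auto
next
  case False
  then show ?thesis
    using provable_from_unsat_literals[OF assms(3) ne] assms(1) by blast
qed

lemma provable_from_lit_cases:
  "provable_from (lit (True, t, c) # H) f \<Longrightarrow> provable_from (lit (False, t, c) # H) f \<Longrightarrow> provable_from H f"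
  by (rule provable_consequence[of "[foldr Imp (lit (True, t, c) # H) f, foldr Imp (lit (False, t, c) # H) f]"])
    (auto simp: lit_def dest: provable_wff)

theorem completeness:
  assumes "wff f" and "valid TYPE('d) f" and "infinite (UNIV :: 'd set)"
  shows "provable f"
proof -
  have "provable_from (map lit L) f"
    if "\<forall>(t, c)\<in>set As. t \<noteq> []" and "\<forall>(b, t, c)\<in>set L. t \<noteq> []"
      and "set (atoms f) \<subseteq> set As \<union> snd ` set L" for As L
    using that
  proof (induction As arbitrary: L)
    case Nil
    then show ?case
      using provable_from_literals[OF assms] by simp
  next
    case (Cons a As)
    obtain t c where a: "a = (t, c)"
      by fastforce
    have "provable_from (lit (b, t, c) # map lit L) f" for b
      using Cons.prems a Cons.IH[of "(b, t, c) # L"] by auto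
    then show ?case
      using provable_from_lit_cases by blast
  qed
  from this[of "atoms f" "[]"] show ?thesis
    using wff_atoms[OF assms(1)] by simp
qed

theorem theorem7p3:
  fixes f :: fm
  assumes "wff f"
    and "infinite (UNIV :: 'd set)"
  shows "(provable f \<longleftrightarrow> valid TYPE('d) f) \<and> (provable f \<longrightarrow> valid TYPE('e) f)"
proof (intro conjI iffI impI)
  show "valid TYPE('d) f" if "provable f"
    using that by (rule soundness)
  show "provable f" if "valid TYPE('d) f"
    using assms(1) that assms(2) by (rule completeness)
  show "valid TYPE('e) f" if "provable f"
    using that by (rule soundness)
qed

end
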